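(* Let $\mathcal{G}=(G,\lambda)$ be a simple temporal clique, $G=(V,E)$, and let $\mathcal{T}^-=(V,E^-_T)$ be obtained by the forward construction. Then the forward fireworks cover $S^-_T=\{\{u,v\}\in E:(u,v)\in E^-_T\}\cup\{\{u,v\}\in E: u \text{ is an emitter}\}$ is a temporal spanner of $\mathcal{G}$.
   Context: A simple temporal clique is a pair $\mathcal{G}=(G,\lambda)$ where $G=(V,E)$ is the complete graph on a finite vertex set $V$ and $\lambda:E\to\mathbb{N}$ assigns to each edge a single integer label such that any two distinct edges sharing an endpoint have different labels; the label of an arc $(x,y)$ is $\lambda(\{x,y\})$. A journey from $x$ to $y$ is a sequence of vertices $x=u_0,\dots,u_k=y$ ($k\ge1$) with $\lambda(\{u_{i-1},u_i\})<\lambda(\{u_i,u_{i+1}\})$ for $1\le i<k$. A set $E'\subseteq E$ is a temporal spanner of $\mathcal{G}$ if for every ordered pair of distinct vertices $x,y$ there is a journey from $x$ to $y$ using only edges of $E'$. For a vertex $v$, $e^-(v)$ is the edge incident to $v$ with smallest label. Forward construction: let $E^-$ be the set of arcs $(u,v)$ with $\{u,v\}=e^-(v)$, except that if $e^-(u)=e^-(v)=\{u,v\}$ only one of the two arcs $(u,v),(v,u)$ is included (arbitrarily). Initialize $E^-_T:=E^-$. For every vertex $v$ of out-degree at least $2$ in $(V,E^-)$, let $(v,u_1),\dots,(v,u_\ell)$ be its out-arcs in $E^-$, where $(v,u_\ell)$ has the largest label; for each $i<\ell$, if $u_i$ has out-degree $0$ in $(V,E^-)$, replace $(v,u_i)$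 by $(u_i,v)$ in $E^-_T$, and otherwise remove $(v,u_i)$ from $E^-_T$. Set $\mathcal{T}^-=(V,E^-_T)$. An emitter is a vertex of out-degree $0$ in $\mathcal{T}^-$. *)

theory Defs
  imports Main
begin

definition clique_edges :: "'a set \<Rightarrow> 'a set set" where
  "clique_edges V = {{x, y} | x y. x \<in> V \<and> y \<in> V \<and> x \<noteq> y}"

definition simple_temporal_clique :: "'a set \<Rightarrow> ('a set \<Rightarrow> nat) \<Rightarrow> bool" where
  "simple_temporal_clique V lam \<longleftrightarrow> finite V \<and>
     (\<forall>e \<in> clique_edges V. \<forall>f \<in> clique_edges V. e \<noteq> f \<and> e \<inter> f \<noteq> {} \<longrightarrow> lam e \<noteq> lam f)"

definition emin :: "'a set \<Rightarrow> ('a set \<Rightarrow> nat) \<Rightarrow> 'a \<Rightarrow> 'a set" where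
  "emin V lam v = (ARG_MIN lam e. e \<in> clique_edges V \<and> v \<in> e)"

text \<open>A is a valid choice of the arc set E^- (the arbitrary choice for
  edges that are minimal at both endpoints is left open).\<close>
definition is_Eminus :: "'a set \<Rightarrow> ('a set \<Rightarrow> nat) \<Rightarrow> ('a \<times> 'a) set \<Rightarrow> bool" where
  "is_Eminus V lam A \<longleftrightarrow>
     (\<forall>u v. (u, v) \<in> A \<longrightarrow> u \<in> V \<and> v \<in> V \<and> u \<noteq> v \<and> {u, v} = emin V lam v) \<and>
     (\<forall>u \<in> V. \<forall>v \<in> V. u \<noteq> v \<and> {u, v} = emin V lam v \<longrightarrow>
        (if {u, v} = emin V lam u then ((u, v) \<in> A \<longleftrightarrow> (v, u) \<notin> A) else (u, v) \<in> A))"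

definition out_deg :: "('a \<times> 'a) set \<Rightarrow> 'a \<Rightarrow> nat" where
  "out_deg A v = card {w. (v, w) \<in> A}"

definition last_out :: "('a set \<Rightarrow> nat) \<Rightarrow> ('a \<times> 'a) set \<Rightarrow> 'a \<Rightarrow> 'a \<Rightarrow> bool" where
  "last_out lam A v u \<longleftrightarrow> (v, u) \<in> A \<and> (\<forall>w. (v, w) \<in> A \<longrightarrow> lam {v, w} \<le> lam {v, u})"

definition E_T :: "('a set \<Rightarrow> nat) \<Rightarrow> ('a \<times> 'a) set \<Rightarrow> ('a \<times> 'a) set" where
  "E_T lam A =
     {(v, u). (v, u) \<in> A \<and> (out_deg A v < 2 \<or> last_out lam A v u)} \<union>
     {(u, v). (v, u) \<in> A \<and> out_deg A v \<ge> 2 \<and> \<not> last_out lam A v u \<and> out_deg A u = 0}"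

definition emitter :: "'a set \<Rightarrow> ('a \<times> 'a) set \<Rightarrow> 'a \<Rightarrow> bool" where
  "emitter V T v \<longleftrightarrow> v \<in> V \<and> out_deg T v = 0"

definition fireworks_cover :: "'a set \<Rightarrow> ('a set \<Rightarrow> nat) \<Rightarrow> ('a \<times> 'a) set \<Rightarrow> 'a set set" where
  "fireworks_cover V lam A =
     {{u, v} | u v. {u, v} \<in> clique_edges V \<and> (u, v) \<in> E_T lam A} \<union>
     {{u, v} | u v. {u, v} \<in> clique_edges V \<and> emitter V (E_T lam A) u}"

definition journey :: "'a set set \<Rightarrow> ('a set \<Rightarrow> nat) \<Rightarrow> 'a \<Rightarrow> 'a \<Rightarrow> 'a list \<Rightarrow> bool" where
  "journey E' lam x y xs \<longleftrightarrow> length xs \<ge> 2 \<and> hd xs = x \<and> last xs = y \<and>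
     (\<forall>i. i + 1 < length xs \<longrightarrow> {xs ! i, xs ! (i + 1)} \<in> E') \<and>
     (\<forall>i. i + 2 < length xs \<longrightarrow> lam {xs ! i, xs ! (i + 1)} < lam {xs ! (i + 1), xs ! (i + 2)})"

definition temporal_spanner :: "'a set \<Rightarrow> ('a set \<Rightarrow> nat) \<Rightarrow> 'a set set \<Rightarrow> bool" where
  "temporal_spanner V lam E' \<longleftrightarrow> E' \<subseteq> clique_edges V \<and>
     (\<forall>x \<in> V. \<forall>y \<in> V. x \<noteq> y \<longrightarrow> (\<exists>xs. journey E' lam x y xs))"

end

theory Submission
  imports Defs
begin

text \<open>Labels strictly increase along consecutive arcs of \<open>\<T>\<^sup>-\<close>, and the arc by which a walk enters
  an emitter is earlier than every other edge at that emitter. So from \<open>x\<close> one follows arcs of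
  \<open>\<T>\<^sup>-\<close>, which is a journey and must stop because labels increase, until the target is
  reached or an emitter is entered; the emitter's direct edge to the target completes the journey.\<close>

lemma journey_edge: "{x, y} \<in> E \<Longrightarrow> journey E lam x y [x, y]"
  unfolding journey_def by simp

lemma journey_nth_0: "journey E lam x y xs \<Longrightarrow> xs ! 0 = x"
  unfolding journey_def by (cases xs) auto

lemma journey_Cons:
  assumes ys: "journey E lam b y ys" and ab: "{a, b} \<in> E" and lt: "lam {a, b} < lam {b, ys ! 1}"
  shows "journey E lam a y (a # ys)"
proof -
  have len: "length ys \<ge> 2" and last: "last ys = y"
    and edges: "\<And>i. i + 1 < length ys \<Longrightarrow> {ys ! i, ys ! (i + 1)} \<in> E"
    and labels: "\<And>i. i + 2 < length ys \<Longrightarrow> lam {ys ! i, ys ! (i + 1)} < lam {ys ! (i + 1), ys ! (i + 2)}"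
    using ys unfolding journey_def by blast+
  have hd: "ys ! 0 = b" using journey_nth_0[OF ys] .
  have "{(a # ys) ! i, (a # ys) ! (i + 1)} \<in> E" if "i + 1 < length (a # ys)" for i
    using that ab hd edges by (cases i) auto
  moreover have "lam {(a # ys) ! i, (a # ys) ! (i + 1)} < lam {(a # ys) ! (i + 1), (a # ys) ! (i + 2)}"
    if "i + 2 < length (a # ys)" for i
  proof (cases i)
    case 0
    then show ?thesis using lt hd by (simp add: numeral_2_eq_2)
  next
    case (Suc j)
    then show ?thesis using that labels[of j] by (simp add: numeral_2_eq_2)
  qed
  ultimately show ?thesis using len last unfolding journey_def by auto
qed

locale increasing_arcs =
  fixes V :: "'a set" and lam :: "'a set \<Rightarrow> nat" and R :: "('a \<times> 'a) set" and S :: "'a set set"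
  assumes finite_R: "finite R"
    and arcs_in_V: "R \<subseteq> V \<times> V"
    and labels_increase: "\<And>a b c. (a, b) \<in> R \<Longrightarrow> (b, c) \<in> R \<Longrightarrow> lam {a, b} < lam {b, c}"
    and sink_entry_earliest: "\<And>a b y. (a, b) \<in> R \<Longrightarrow> \<forall>c. (b, c) \<notin> R \<Longrightarrow> y \<in> V \<Longrightarrow> y \<notin> {a, b}
      \<Longrightarrow> lam {a, b} < lam {b, y}"
    and arcs_in_S: "\<And>a b. (a, b) \<in> R \<Longrightarrow> {a, b} \<in> S"
    and sink_edges_in_S: "\<And>b y. \<forall>c. (b, c) \<notin> R \<Longrightarrow> b \<in> V \<Longrightarrow> y \<in> V \<Longrightarrow> y \<noteq> b \<Longrightarrow> {b, y} \<in> S"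
begin

lemma journey_via_arc:
  assumes "(a, b) \<in> R" and "y \<in> V" and "y \<noteq> a"
  shows "\<exists>xs. journey S lam a y xs \<and> xs ! 1 = b"
  using assms
proof (induction "Max ((\<lambda>(c, d). lam {c, d}) ` R) - lam {a, b}" arbitrary: a b rule: less_induct)
  case less
  have ab: "{a, b} \<in> S" using arcs_in_S less.prems(1) .
  consider "y = b" | "y \<noteq> b" "\<forall>c. (b, c) \<notin> R" | c where "y \<noteq> b" "(b, c) \<in> R" by blast
  then show ?case
  proof cases
    case 1
    have "journey S lam a y [a, b]" using journey_edge[OF ab] 1 by simp
    then show ?thesis by (intro exI[of _ "[a, b]"]) simp
  next
    case 2
    have "b \<in> V" using arcs_in_V less.prems(1) by blast
    then have "journey S lam b y [b, y]"
      using sink_edges_in_S[OF 2(2)] 2(1) less.prems(2) by (simp add: journey_edge)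
    moreover have "lam {a, b} < lam {b, y}"
      using sink_entry_earliest[OF less.prems(1) 2(2) less.prems(2)] 2(1) less.prems(3) by simp
    ultimately have "journey S lam a y [a, b, y]" using journey_Cons[OF _ ab] by simp
    then show ?thesis by (intro exI[of _ "[a, b, y]"]) simp
  next
    case 3
    let ?M = "Max ((\<lambda>(c, d). lam {c, d}) ` R)"
    have lt: "lam {a, b} < lam {b, c}" using labels_increase less.prems(1) 3(2) .
    moreover have "lam {b, c} \<le> ?M" using finite_R 3(2) by (auto intro!: Max_ge)
    ultimately have "?M - lam {b, c} < ?M - lam {a, b}" by linarith
    then obtain ys where ys: "journey S lam b y ys" "ys ! 1 = c"
      using less.hyps 3 less.prems(2) by blast
    then have "journey S lam a y (a # ys)" using journey_Cons[OF ys(1) ab] lt by simp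
    then show ?thesis using ys(2) journey_nth_0[OF ys(1)] by (intro exI[of _ "a # ys"]) simp
  qed
qed

lemma temporal_spanner:
  assumes "S \<subseteq> clique_edges V"
  shows "temporal_spanner V lam S"
  unfolding temporal_spanner_def
proof (intro conjI assms ballI impI)
  fix x y assume xy: "x \<in> V" "y \<in> V" "x \<noteq> y"
  show "\<exists>xs. journey S lam x y xs"
  proof (cases "\<forall>b. (x, b) \<notin> R")
    case True
    then have "{x, y} \<in> S" using sink_edges_in_S xy by blast
    then have "journey S lam x y [x, y]" by (rule journey_edge)
    then show ?thesis by blast
  next
    case False
    then show ?thesis using journey_via_arc xy by blast
  qed
qed

end

lemma clique_edgesI: "a \<in> V \<Longrightarrow> b \<in> V \<Longrightarrow> a \<noteq> b \<Longrightarrow> {a, b} \<in> clique_edges V"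
  unfolding clique_edges_def by blast

lemma adjacent_labels_neq:
  assumes "simple_temporal_clique V lam" "a \<in> V" "b \<in> V" "c \<in> V" "a \<noteq> b" "b \<noteq> c" "a \<noteq> c"
  shows "lam {a, b} \<noteq> lam {b, c}"
proof -
  have "\<forall>e \<in> clique_edges V. \<forall>f \<in> clique_edges V. e \<noteq> f \<and> e \<inter> f \<noteq> {} \<longrightarrow> lam e \<noteq> lam f"
    using assms(1) unfolding simple_temporal_clique_def by (rule conjunct2)
  moreover have "{a, b} \<noteq> {b, c}" using assms(5-7) by (simp add: doubleton_eq_iff)
  ultimately show ?thesis
    using clique_edgesI[OF assms(2,3,5)] clique_edgesI[OF assms(3,4,6)] by simp
qed

lemma emin_label_le:
  assumes "emin V lam v = {u, v}" "v \<in> V" "w \<in> V" "w \<noteq> v"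
  shows "lam {u, v} \<le> lam {v, w}"
proof -
  have "{v, w} \<in> clique_edges V \<and> v \<in> {v, w}"
    using clique_edgesI[OF assms(2,3) assms(4)[symmetric]] by simp
  then show ?thesis
    using arg_min_nat_lemma[of "\<lambda>e. e \<in> clique_edges V \<and> v \<in> e" "{v, w}" lam] assms(1)
    unfolding emin_def by simp
qed

lemma mem_E_T_iff:
  "(a, b) \<in> E_T lam A \<longleftrightarrow>
    (a, b) \<in> A \<and> (out_deg A a < 2 \<or> last_out lam A a b) \<or>
    (b, a) \<in> A \<and> out_deg A b \<ge> 2 \<and> \<not> last_out lam A b a \<and> out_deg A a = 0"
  unfolding E_T_def by auto

lemma fireworks_cover_arcI:
  "(u, v) \<in> E_T lam A \<Longrightarrow> {u, v} \<in> clique_edges V \<Longrightarrow> {u, v} \<in> fireworks_cover V lam A"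
  unfolding fireworks_cover_def by (rule UnI1, rule CollectI, rule exI[of _ u], rule exI[of _ v]) simp

lemma fireworks_cover_emitterI:
  "{u, v} \<in> clique_edges V \<Longrightarrow> emitter V (E_T lam A) u \<Longrightarrow> {u, v} \<in> fireworks_cover V lam A"
  unfolding fireworks_cover_def by (rule UnI2, rule CollectI, rule exI[of _ u], rule exI[of _ v]) simp

context
  fixes V :: "'a set" and lam :: "'a set \<Rightarrow> nat" and A :: "('a \<times> 'a) set"
  assumes clique: "simple_temporal_clique V lam" and Eminus: "is_Eminus V lam A"
begin

lemma Eminus_arcD:
  assumes "(u, v) \<in> A"
  shows "u \<in> V" "v \<in> V" "u \<noteq> v" "emin V lam v = {u, v}"
  using assms Eminus unfolding is_Eminus_def by metis+

lemma Eminus_asym: "(u, v) \<in> A \<Longrightarrow> (v, u) \<notin> A"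
  using Eminus Eminus_arcD[of u v] Eminus_arcD[of v u] unfolding is_Eminus_def
  by (metis insert_commute)

lemma Eminus_arc_label_less:
  assumes uv: "(u, v) \<in> A" and w: "w \<in> V" "w \<notin> {u, v}"
  shows "lam {u, v} < lam {v, w}"
proof (rule le_neq_trans)
  show "lam {u, v} \<le> lam {v, w}"
    using emin_label_le[OF Eminus_arcD(4)[OF uv] Eminus_arcD(2)[OF uv] w(1)] w(2) by simp
  show "lam {u, v} \<noteq> lam {v, w}"
    using adjacent_labels_neq[OF clique Eminus_arcD(1,2)[OF uv] w(1) Eminus_arcD(3)[OF uv]] w(2)
    by auto
qed

lemma last_out_exists:
  assumes "out_deg A v \<ge> 2"
  shows "\<exists>u. last_out lam A v u"
proof -
  let ?W = "{w. (v, w) \<in> A}"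
  have "finite ?W" "?W \<noteq> {}" using assms card_gt_0_iff[of ?W] unfolding out_deg_def by linarith+
  then have "Max ((\<lambda>w. lam {v, w}) ` ?W) \<in> (\<lambda>w. lam {v, w}) ` ?W" by simp
  then obtain u where "u \<in> ?W" "lam {v, u} = Max ((\<lambda>w. lam {v, w}) ` ?W)" by auto
  then show ?thesis using \<open>finite ?W\<close> unfolding last_out_def by auto
qed

lemma E_T_arcD: "(a, b) \<in> E_T lam A \<Longrightarrow> a \<in> V \<and> b \<in> V \<and> a \<noteq> b"
  unfolding mem_E_T_iff using Eminus_arcD by blast

lemma E_T_asym: "(a, b) \<in> E_T lam A \<Longrightarrow> (b, a) \<notin> E_T lam A"
  unfolding mem_E_T_iff using Eminus_asym by auto

lemma E_T_labels_increase:
  assumes ab: "(a, b) \<in> E_T lam A" and bc: "(b, c) \<in> E_T lam A"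
  shows "lam {a, b} < lam {b, c}"
proof -
  have "c \<in> V" "c \<noteq> b" "c \<noteq> a" using bc E_T_arcD[OF bc] E_T_asym[OF ab] by auto
  from ab consider "(a, b) \<in> A"
    | "(b, a) \<in> A" "out_deg A b \<ge> 2" "\<not> last_out lam A b a" "out_deg A a = 0"
    unfolding mem_E_T_iff by auto
  then show ?thesis
  proof cases
    case 1
    then show ?thesis using Eminus_arc_label_less \<open>c \<in> V\<close> \<open>c \<noteq> b\<close> \<open>c \<noteq> a\<close> by blast
  next
    case 2
    \<comment> \<open>\<open>b\<close> has out-arcs in \<open>E\<^sup>-\<close>, so \<open>(b, c)\<close> is not reversed and must be the latest of them\<close>
    have "out_deg A b \<noteq> 0" using 2 by linarith
    then have "last_out lam A b c" using bc 2 unfolding mem_E_T_iff by auto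
    then have "lam {a, b} \<le> lam {b, c}" using 2 unfolding last_out_def by (simp add: insert_commute)
    moreover have "lam {a, b} \<noteq> lam {b, c}"
      using adjacent_labels_neq[OF clique] E_T_arcD[OF ab] \<open>c \<in> V\<close> \<open>c \<noteq> b\<close> \<open>c \<noteq> a\<close> by metis
    ultimately show ?thesis by (rule le_neq_trans)
  qed
qed

lemma E_T_sink_entry_earliest:
  assumes ab: "(a, b) \<in> E_T lam A" and sink: "\<forall>c. (b, c) \<notin> E_T lam A"
    and "y \<in> V" "y \<notin> {a, b}"
  shows "lam {a, b} < lam {b, y}"
proof -
  \<comment> \<open>a reversed arc \<open>(a, b)\<close> would leave \<open>b\<close> with its latest \<open>E\<^sup>-\<close> arc still in \<open>E\<^sup>-\<^sub>T\<close>\<close>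
  have "\<not> out_deg A b \<ge> 2"
  proof
    assume "out_deg A b \<ge> 2"
    then obtain u where "last_out lam A b u" using last_out_exists by blast
    then have "(b, u) \<in> E_T lam A" unfolding mem_E_T_iff last_out_def by simp
    with sink show False by blast
  qed
  then have "(a, b) \<in> A" using ab unfolding mem_E_T_iff by auto
  then show ?thesis using Eminus_arc_label_less assms(3,4) by blast
qed

lemma emitter_iff_sink:
  "emitter V (E_T lam A) v \<longleftrightarrow> v \<in> V \<and> (\<forall>w. (v, w) \<notin> E_T lam A)"
proof -
  have "{w. (v, w) \<in> E_T lam A} \<subseteq> V" using E_T_arcD by blast
  then have "finite {w. (v, w) \<in> E_T lam A}"
    using clique finite_subset unfolding simple_temporal_clique_def by blast
  then show ?thesis unfolding emitter_def out_deg_def by auto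
qed

lemma increasing_arcs_fireworks_cover:
  "increasing_arcs V lam (E_T lam A) (fireworks_cover V lam A)"
proof
  show "E_T lam A \<subseteq> V \<times> V" using E_T_arcD by auto
  moreover have "finite (V \<times> V)" using clique unfolding simple_temporal_clique_def by simp
  ultimately show "finite (E_T lam A)" by (rule finite_subset)
  show "lam {a, b} < lam {b, c}" if "(a, b) \<in> E_T lam A" "(b, c) \<in> E_T lam A" for a b c
    using E_T_labels_increase that .
  show "lam {a, b} < lam {b, y}"
    if "(a, b) \<in> E_T lam A" "\<forall>c. (b, c) \<notin> E_T lam A" "y \<in> V" "y \<notin> {a, b}" for a b y
    using E_T_sink_entry_earliest that .
  show "{a, b} \<in> fireworks_cover V lam A" if "(a, b) \<in> E_T lam A" for a b
  proof -
    have "{a, b} \<in> clique_edges V" using E_T_arcD[OF that] by (meson clique_edgesI)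
    with that show ?thesis by (rule fireworks_cover_arcI)
  qed
  show "{b, y} \<in> fireworks_cover V lam A"
    if "\<forall>c. (b, c) \<notin> E_T lam A" "b \<in> V" "y \<in> V" "y \<noteq> b" for b y
  proof -
    have "{b, y} \<in> clique_edges V" using that(2-4) by (simp add: clique_edgesI)
    moreover have "emitter V (E_T lam A) b" using that(1,2) by (simp add: emitter_iff_sink)
    ultimately show ?thesis by (rule fireworks_cover_emitterI)
  qed
qed

end

theorem theorem2:
  fixes V :: "'a set" and lam :: "'a set \<Rightarrow> nat" and A :: "('a \<times> 'a) set"
  assumes "simple_temporal_clique V lam"
    and "is_Eminus V lam A"
  shows "temporal_spanner V lam (fireworks_cover V lam A)"
proof (rule increasing_arcs.temporal_spanner)
  show "increasing_arcs V lam (E_T lam A) (fireworks_cover V lam A)"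
    using increasing_arcs_fireworks_cover[OF assms] .
  show "fireworks_cover V lam A \<subseteq> clique_edges V"
    unfolding fireworks_cover_def by blast
qed

end
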